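(* Let $m\ge n$, $B\in\mathbb R^{n\times m}$ of full row rank, $f:\mathbb R^m\to\mathbb R$ and $h:\mathbb R^n\to\mathbb R$ convex and continuously differentiable with Lipschitz gradients, $\mathcal L(u,p)=f(u)-h(p)+(Bu,p)$, and $(u^*,p^* )$ a saddle point of $\mathcal L$. Let $T_{\mathcal U},\mathcal I_{\mathcal V}$ ($m\times m$) and $T_{\mathcal P},\mathcal I_{\mathcal Q}$ ($n\times n$) be symmetric positive definite. Suppose $h\in\mathcal S^{1,1}_{\mu_{h,T_{\mathcal P}},L_{h,T_{\mathcal P}}}$ w.r.t. $T_{\mathcal P}$ with $L_{h,T_{\mathcal P}}\le1$, $f\in\mathcal S^{1,1}_{\mu_{f,T_{\mathcal U}},L_{f,T_{\mathcal U}}}$ w.r.t. $T_{\mathcal U}$ with $L_{f,T_{\mathcal U}}\le1$, and $f_B$ is strongly convex w.r.t. $\mathcal I_{\mathcal V}$ with constant $\mu_{f_B,\mathcal I_{\mathcal V}}>0$. Define the symmetric TPD field $\mathcal G=(\mathcal G^u,\mathcal G^p)$, $$\mathcal G^u(u,p)=-\mathcal I_{\mathcal V}^{-1}\big(\partial_u\mathcal L(u,p)+B^\top T_{\mathcal P}^{-1}\partial_p\mathcal L(u,p)\big),\qquad \mathcal G^p(u,p)=\mathcal I_{\mathcal Q}^{-1}\big(\partial_p\mathcal L(u,p)-BT_{\mathcal U}^{-1}\partial_u\mathcal L(u,p)\big),$$ and $\mathcal E(u,p)=\frac12\|u-u^*\|^2_{\mathcal I_{\mathcal V}}+\frac12\|p-p^*\|^2_{\mathcal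 I_{\mathcal Q}}$. Then for all $(u,p)$, $$-\nabla\mathcal E(u,p)\cdot\mathcal G(u,p)\ge\mu\,\mathcal E(u,p)+\frac{\mu_{f,T_{\mathcal U}}}{2}\|v-v^*\|^2_{T_{\mathcal U}}+\frac{\mu_{h,T_{\mathcal P}}}{2}\|q-q^*\|^2_{T_{\mathcal P}},$$ where $0<\mu=\min\{\mu_{f_B,\mathcal I_{\mathcal V}},\mu_{h_B,\mathcal I_{\mathcal Q}}\}$. Consequently, if $(u(t),p(t))$ solves $u'=\mathcal G^u(u,p)$, $p'=\mathcal G^p(u,p)$, then $\mathcal E(u(t),p(t))\le e^{-\mu t}\mathcal E(u(0),p(0))$ for all $t>0$.
   Context: $\partial_u\mathcal L(u,p)=\nabla f(u)+B^\top p$, $\partial_p\mathcal L(u,p)=Bu-\nabla h(p)$; a saddle point satisfies $\partial_u\mathcal L(u^*,p^* )=0$, $\partial_p\mathcal L(u^*,p^* )=0$. For SPD $M$, $\|x\|_M=(Mx,x)^{1/2}$; $D_g(y,x)=g(y)-g(x)-(\nabla g(x),y-x)$; $g\in\mathcal S^{1,1}_{\mu_{g,M},L_{g,M}}$ w.r.t. $M$ means $\frac{\mu_{g,M}}2\|x-y\|_M^2\le D_g(y,x)\le\frac{L_{g,M}}2\|x-y\|_M^2$ for all $x,y$ ($\mu_{g,M}\ge0$); strong convexity with constant $\mu_{g,M}$ means the lower bound holds. Define $f_B(u)=f(u)+\frac12(B^\top T_{\mathcal P}^{-1}Bu,u)$, $h_B(p)=h(p)+\frac12(BT_{\mathcal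 U}^{-1}B^\top p,p)$ with strong convexity constant $\mu_{h_B,\mathcal I_{\mathcal Q}}$ w.r.t. $\mathcal I_{\mathcal Q}$; $v=u+T_{\mathcal U}^{-1}B^\top p$, $q=p-T_{\mathcal P}^{-1}Bu$, and $v^*,q^*$ the same expressions at $(u^*,p^* )$. $\nabla\mathcal E\cdot\mathcal G$ means $(\mathcal I_{\mathcal V}(u-u^* ),\mathcal G^u)+(\mathcal I_{\mathcal Q}(p-p^* ),\mathcal G^p)$. *)

theory Defs
  imports "HOL-Analysis.Analysis"
begin

definition spd :: "real^'k^'k \<Rightarrow> bool" where
  "spd M \<longleftrightarrow> transpose M = M \<and> (\<forall>x. x \<noteq> 0 \<longrightarrow> x \<bullet> (M *v x) > 0)"

definition mnorm :: "real^'k^'k \<Rightarrow> real^'k \<Rightarrow> real" where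
  "mnorm M x = sqrt ((M *v x) \<bullet> x)"

definition bregman :: "(real^'k \<Rightarrow> real) \<Rightarrow> (real^'k \<Rightarrow> real^'k) \<Rightarrow> real^'k \<Rightarrow> real^'k \<Rightarrow> real" where
  "bregman g gg y x = g y - g x - gg x \<bullet> (y - x)"

definition S11 :: "(real^'k \<Rightarrow> real) \<Rightarrow> (real^'k \<Rightarrow> real^'k) \<Rightarrow> real^'k^'k \<Rightarrow> real \<Rightarrow> real \<Rightarrow> bool" where
  "S11 g gg M \<mu> L \<longleftrightarrow> \<mu> \<ge> 0 \<and>
     (\<forall>x y. \<mu> / 2 * (mnorm M (x - y))\<^sup>2 \<le> bregman g gg y x \<and>
            bregman g gg y x \<le> L / 2 * (mnorm M (x - y))\<^sup>2)"

definition strongly_convex_wrt :: "(real^'k \<Rightarrow> real) \<Rightarrow> (real^'k \<Rightarrow> real^'k) \<Rightarrow> real^'k^'k \<Rightarrow> real \<Rightarrow> bool" where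
  "strongly_convex_wrt g gg M \<mu> \<longleftrightarrow>
     (\<forall>x y. \<mu> / 2 * (mnorm M (x - y))\<^sup>2 \<le> bregman g gg y x)"

definition sc_const :: "(real^'k \<Rightarrow> real) \<Rightarrow> (real^'k \<Rightarrow> real^'k) \<Rightarrow> real^'k^'k \<Rightarrow> real" where
  "sc_const g gg M = Sup {c. strongly_convex_wrt g gg M c}"

end

theory Submission
  imports Defs
begin

text \<open>With \<open>\<xi> = u - u\<^sup>*\<close>, \<open>\<eta> = p - p\<^sup>*\<close>, \<open>s = T\<^sub>U\<inverse> B\<^sup>T \<eta>\<close> and \<open>t = T\<^sub>P\<inverse> B \<xi>\<close> one has
  \<open>v - v\<^sup>* = \<xi> + s\<close> and \<open>q - q\<^sup>* = \<eta> - t\<close>. By the saddle point equations, \<open>-\<nabla>\<E> \<cdot> \<G>\<close> is a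
  sum of inner products of \<open>\<xi>, \<eta>, s, t\<close> with the gradient differences of \<open>f\<close> and \<open>h\<close>, in which
  the skew coupling \<open>(B \<xi>, \<eta>)\<close> cancels. Strong monotonicity of \<open>\<nabla>f\<^sub>B\<close> and \<open>\<nabla>h\<^sub>B\<close> bounds one
  half of it below by \<open>\<mu> \<E>\<close>. The other half is bounded below by the \<open>S\<^sup>1\<^sup>,\<^sup>1\<close> bounds of \<open>f\<close> and
  \<open>h\<close> at the shifted points \<open>u + s\<close> and \<open>p - t\<close>, where \<open>L \<le> 1\<close> absorbs the quadratic terms in
  \<open>s\<close> and \<open>t\<close>. Full row rank of \<open>B\<close> makes \<open>B T\<^sub>U\<inverse> B\<^sup>T\<close> positive definite, hence
  \<open>\<mu>\<^sub>h\<^sub>B > 0\<close>, and the decay of \<open>\<E>\<close> along the flow follows from \<open>(e\<^sup>\<mu>\<^sup>t \<E>)' \<le> 0\<close>.\<close>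

section \<open>Symmetric positive definite matrices\<close>

lemma inner_matrix_vector_left: "(A *v x) \<bullet> y = x \<bullet> (transpose A *v y)"
  for A :: "real^'m^'n"
  by (metis dot_lmul_matrix vector_transpose_matrix)

lemma inner_matrix_vector_right: "x \<bullet> (A *v y) = (transpose A *v x) \<bullet> y"
  for A :: "real^'m^'n"
  by (metis inner_matrix_vector_left transpose_transpose)

lemma matrix_vector_mult_uminus: "A *v (- x) = - (A *v x)"
  for A :: "real^'m^'n"
  by (rule linear_neg[OF matrix_vector_mul_linear])

lemma invertible_matrix_inv:
  fixes A :: "real^'n^'n"
  assumes "invertible A"
  shows matrix_inv_right: "A ** matrix_inv A = mat 1"
    and matrix_inv_left: "matrix_inv A ** A = mat 1"
proof -
  have "A ** matrix_inv A = mat 1 \<and> matrix_inv A ** A = mat 1"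
    using assms unfolding invertible_def matrix_inv_def by (rule someI_ex)
  then show "A ** matrix_inv A = mat 1" "matrix_inv A ** A = mat 1" by auto
qed

lemma spd_inner_commute: "spd M \<Longrightarrow> (M *v x) \<bullet> y = x \<bullet> (M *v y)"
  unfolding spd_def by (metis inner_matrix_vector_left)

lemma spd_quadratic_pos: "spd M \<Longrightarrow> x \<noteq> 0 \<Longrightarrow> 0 < (M *v x) \<bullet> x"
  unfolding spd_def by (metis inner_commute)

lemma spd_quadratic_nonneg: "spd M \<Longrightarrow> 0 \<le> (M *v x) \<bullet> x"
  by (cases "x = 0") (auto dest: spd_quadratic_pos[of M x])

lemma mnorm_square: "spd M \<Longrightarrow> (mnorm M x)\<^sup>2 = (M *v x) \<bullet> x"
  unfolding mnorm_def by (simp add: spd_quadratic_nonneg)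

lemma mnorm_uminus: "mnorm M (- x) = mnorm M x"
  unfolding mnorm_def by (simp add: matrix_vector_mult_uminus)

lemma mnorm_minus_commute: "mnorm M (x - y) = mnorm M (y - x)"
  by (metis minus_diff_eq mnorm_uminus)

lemma spd_invertible:
  assumes "spd M"
  shows "invertible M"
proof -
  have "M *v x = 0 \<Longrightarrow> x = 0" for x
    using spd_quadratic_pos[OF assms, of x] by auto
  then have "inj ((*v) M)"
    by (metis (no_types, lifting) matrix_vector_mult_diff_distrib injI right_minus_eq)
  then show ?thesis
    using matrix_left_invertible_injective invertible_left_inverse by blast
qed

lemma spd_matrix_inv_cancel:
  assumes "spd M"
  shows "M *v (matrix_inv M *v x) = x" "matrix_inv M *v (M *v x) = x"
  using spd_invertible[OF assms]
  by (simp_all add: matrix_vector_mul_assoc matrix_inv_right matrix_inv_left)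

lemma spd_inner_matrix_inv: "spd M \<Longrightarrow> (M *v x) \<bullet> (matrix_inv M *v y) = x \<bullet> y"
  by (simp add: spd_inner_commute spd_matrix_inv_cancel)

lemma spd_matrix_inv:
  assumes M: "spd M"
  shows "spd (matrix_inv M)"
  unfolding spd_def
proof (intro conjI allI impI)
  let ?N = "matrix_inv M"
  have "transpose ?N ** M = mat 1"
    by (metis M matrix_inv_right matrix_transpose_mul spd_def spd_invertible transpose_mat)
  then have "transpose ?N = transpose ?N ** (M ** ?N)"
    by (simp add: M matrix_inv_right spd_invertible)
  also have "\<dots> = ?N"
    by (simp add: matrix_mul_assoc \<open>transpose ?N ** M = mat 1\<close>)
  finally show "transpose ?N = ?N" .
  fix x :: "real^'a"
  assume "x \<noteq> 0"
  then have "?N *v x \<noteq> 0"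
    by (metis M spd_matrix_inv_cancel(1) matrix_vector_mult_0_right)
  then show "0 < x \<bullet> (?N *v x)"
    using spd_quadratic_pos[OF M, of "?N *v x"] by (simp add: M spd_matrix_inv_cancel inner_commute)
qed

lemma quadratic_form_congruence:
  fixes C :: "real^'m^'n" and W :: "real^'m^'m"
  shows "((C ** W ** transpose C) *v x) \<bullet> x = (transpose C *v x) \<bullet> (W *v (transpose C *v x))"
proof -
  have "(C ** W ** transpose C) *v x = C *v (W *v (transpose C *v x))"
    by (simp only: matrix_vector_mul_assoc matrix_mul_assoc)
  then show ?thesis
    by (metis inner_commute inner_matrix_vector_left)
qed

lemma spd_congruence:
  fixes B :: "real^'m^'n" and T :: "real^'m^'m"
  assumes T: "spd T" and inj: "inj ((*v) (transpose B))"
  shows "spd (B ** T ** transpose B)"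
  unfolding spd_def
proof (intro conjI allI impI)
  show "transpose (B ** T ** transpose B) = B ** T ** transpose B"
    using T by (simp add: spd_def matrix_transpose_mul matrix_mul_assoc)
  fix x :: "real^'n"
  assume "x \<noteq> 0"
  then have "transpose B *v x \<noteq> 0"
    using inj by (metis injD matrix_vector_mult_0_right)
  then show "0 < x \<bullet> ((B ** T ** transpose B) *v x)"
    using spd_quadratic_pos[OF T] quadratic_form_congruence[of B T x] by (simp add: inner_commute)
qed

lemma quadratic_form_coercive:
  fixes A :: "real^'n^'n"
  assumes pos: "\<And>z. z \<noteq> 0 \<Longrightarrow> 0 < (A *v z) \<bullet> z"
  shows "\<exists>m>0. \<forall>z. m * (norm z)\<^sup>2 \<le> (A *v z) \<bullet> z"
proof -
  let ?S = "sphere (0::real^'n) 1"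
  have cont: "continuous_on ?S (\<lambda>z. (A *v z) \<bullet> z)"
    by (intro continuous_intros bounded_linear.continuous_on[OF matrix_vector_mul_bounded_linear])
  obtain z0 where z0: "z0 \<in> ?S" and z0_min: "\<And>y. y \<in> ?S \<Longrightarrow> (A *v z0) \<bullet> z0 \<le> (A *v y) \<bullet> y"
    using continuous_attains_inf[OF compact_sphere _ cont] by auto
  have "(A *v z0) \<bullet> z0 * (norm z)\<^sup>2 \<le> (A *v z) \<bullet> z" for z
  proof (cases "z = 0")
    case False
    have "(A *v z0) \<bullet> z0 \<le> (A *v ((1 / norm z) *\<^sub>R z)) \<bullet> ((1 / norm z) *\<^sub>R z)"
      using False by (intro z0_min) simp
    also have "\<dots> = ((A *v z) \<bullet> z) / (norm z)\<^sup>2"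
      by (simp add: matrix_vector_mult_scaleR power2_eq_square)
    finally show ?thesis
      using False by (simp add: field_simps)
  qed simp
  moreover have "0 < (A *v z0) \<bullet> z0"
    using z0 by (intro pos) auto
  ultimately show ?thesis by blast
qed

lemma quadratic_form_bounded:
  fixes A :: "real^'n^'n"
  shows "\<exists>K>0. \<forall>z. (A *v z) \<bullet> z \<le> K * (norm z)\<^sup>2"
proof -
  obtain K where K: "K > 0" "\<And>z. norm (A *v z) \<le> norm z * K"
    using bounded_linear.pos_bounded[OF matrix_vector_mul_bounded_linear[of A]] by blast
  have "(A *v z) \<bullet> z \<le> K * (norm z)\<^sup>2" for z
  proof -
    have "(A *v z) \<bullet> z \<le> norm (A *v z) * norm z" by (rule norm_cauchy_schwarz)
    also have "\<dots> \<le> norm z * K * norm z" using K by (simp add: mult_right_mono)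
    finally show ?thesis by (simp add: power2_eq_square mult_ac)
  qed
  then show ?thesis using K by blast
qed

lemma spd_quadratic_form_dominates:
  fixes A M :: "real^'n^'n"
  assumes "spd A"
  shows "\<exists>c>0. \<forall>z. c * ((M *v z) \<bullet> z) \<le> (A *v z) \<bullet> z"
proof -
  obtain m where m: "m > 0" "\<And>z. m * (norm z)\<^sup>2 \<le> (A *v z) \<bullet> z"
    using quadratic_form_coercive[of A] spd_quadratic_pos[OF assms] by blast
  obtain K where K: "K > 0" "\<And>z. (M *v z) \<bullet> z \<le> K * (norm z)\<^sup>2"
    using quadratic_form_bounded[of M] by blast
  have "m / K * ((M *v z) \<bullet> z) \<le> (A *v z) \<bullet> z" for z
  proof -
    have "m / K * ((M *v z) \<bullet> z) \<le> m / K * (K * (norm z)\<^sup>2)"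
      using K m by (intro mult_left_mono) auto
    also have "\<dots> = m * (norm z)\<^sup>2" using K by simp
    finally show ?thesis using m(2)[of z] by linarith
  qed
  then show ?thesis using m K by (intro exI[of _ "m / K"]) auto
qed

section \<open>Bregman divergences and strong convexity\<close>

lemma bregman_add_swap: "bregman g gg y x + bregman g gg x y = (gg y - gg x) \<bullet> (y - x)"
  unfolding bregman_def by (simp add: algebra_simps inner_diff_left inner_diff_right)

lemma bregman_add_quadratic:
  fixes A :: "real^'n^'n"
  assumes "transpose A = A"
  shows "bregman (\<lambda>p. g p + 1/2 * ((A *v p) \<bullet> p)) (\<lambda>p. gg p + A *v p) y x
       = bregman g gg y x + 1/2 * ((A *v (x - y)) \<bullet> (x - y))"
proof -
  have "(A *v x) \<bullet> y = (A *v y) \<bullet> x"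
    using assms by (metis inner_commute inner_matrix_vector_left)
  then show ?thesis
    unfolding bregman_def
    by (simp add: algebra_simps inner_diff_left inner_diff_right inner_add_left)
qed

lemma S11_bregman_nonneg:
  assumes "S11 g gg M \<mu> L"
  shows "0 \<le> bregman g gg y x"
proof -
  have "0 \<le> \<mu> / 2 * (mnorm M (x - y))\<^sup>2" and "\<mu> / 2 * (mnorm M (x - y))\<^sup>2 \<le> bregman g gg y x"
    using assms unfolding S11_def by auto
  then show ?thesis by linarith
qed

lemma S11_shifted_bound:
  assumes S: "S11 g gg M \<mu> L" and L1: "L \<le> 1"
  shows "\<mu>/2 * (mnorm M (x - y + s))\<^sup>2
     \<le> 1/2 * ((gg x - gg y) \<bullet> (x - y)) + (gg x - gg y) \<bullet> s + 1/2 * (mnorm M s)\<^sup>2"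
proof -
  let ?D = "bregman g gg"
  have lower: "\<mu>/2 * (mnorm M (a - b))\<^sup>2 \<le> ?D b a" for a b
    using S unfolding S11_def by blast
  have upper: "?D b a \<le> 1/2 * (mnorm M (a - b))\<^sup>2" for a b
  proof -
    have "?D b a \<le> L/2 * (mnorm M (a - b))\<^sup>2" using S unfolding S11_def by blast
    also have "\<dots> \<le> 1/2 * (mnorm M (a - b))\<^sup>2" using L1 by (intro mult_right_mono) simp_all
    finally show ?thesis .
  qed
  \<comment> \<open>combined with the lower bounds at \<open>(x + s, y)\<close>, \<open>(y - s, x)\<close> and the upper bounds at
     \<open>(x + s, x)\<close>, \<open>(y - s, y)\<close>\<close>
  have "(gg x - gg y) \<bullet> (x - y) + 2 * ((gg x - gg y) \<bullet> s)
      = ?D (x + s) y - ?D (x + s) x + ?D (y - s) x - ?D (y - s) y"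
    unfolding bregman_def
    by (simp add: algebra_simps inner_diff_left inner_diff_right inner_add_left inner_add_right)
  moreover have "\<mu>/2 * (mnorm M (x - y + s))\<^sup>2 \<le> ?D (x + s) y"
    using lower[of y "x + s"] mnorm_minus_commute[of M y "x + s"] by (simp add: algebra_simps)
  moreover have "\<mu>/2 * (mnorm M (x - y + s))\<^sup>2 \<le> ?D (y - s) x"
    using lower[of x "y - s"] by (simp add: algebra_simps)
  moreover have "?D (x + s) x \<le> 1/2 * (mnorm M s)\<^sup>2"
    using upper[of "x + s" x] mnorm_uminus[of M s] by simp
  moreover have "?D (y - s) y \<le> 1/2 * (mnorm M s)\<^sup>2"
    using upper[of "y - s" y] by simp
  ultimately show ?thesis by linarith
qed

lemma strongly_convex_wrt_monotone:
  assumes "strongly_convex_wrt g gg M c"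
  shows "c * (mnorm M (x - y))\<^sup>2 \<le> (gg x - gg y) \<bullet> (x - y)"
proof -
  have "c/2 * (mnorm M (x - y))\<^sup>2 \<le> bregman g gg y x"
    and "c/2 * (mnorm M (x - y))\<^sup>2 \<le> bregman g gg x y"
    using assms unfolding strongly_convex_wrt_def by (metis mnorm_minus_commute)+
  then show ?thesis
    using bregman_add_swap[of g gg x y] by linarith
qed

lemma strongly_convex_wrt_add_spd_quadratic:
  fixes A M :: "real^'n^'n"
  assumes A: "spd A" and M: "spd M" and convex: "\<And>x y. 0 \<le> bregman g gg y x"
  shows "\<exists>c>0. strongly_convex_wrt (\<lambda>p. g p + 1/2 * ((A *v p) \<bullet> p)) (\<lambda>p. gg p + A *v p) M c"
proof -
  obtain c where c: "c > 0" "\<And>z. c * ((M *v z) \<bullet> z) \<le> (A *v z) \<bullet> z"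
    using spd_quadratic_form_dominates[OF A] by blast
  have sym: "transpose A = A"
    using A by (simp add: spd_def)
  have "c/2 * (mnorm M (x - y))\<^sup>2
      \<le> bregman (\<lambda>p. g p + 1/2 * ((A *v p) \<bullet> p)) (\<lambda>p. gg p + A *v p) y x" for x y
    unfolding bregman_add_quadratic[OF sym] using c(2)[of "x - y"] convex[of y x]
    by (simp add: mnorm_square[OF M])
  then show ?thesis
    using c(1) unfolding strongly_convex_wrt_def by blast
qed

lemma strongly_convex_wrt_constants_bdd_above:
  fixes M :: "real^'n^'n"
  assumes M: "spd M"
  shows "bdd_above {c. strongly_convex_wrt g gg M c}"
proof -
  obtain z :: "real^'n" where "z \<noteq> 0"
    using zero_neq_one by blast
  then have N: "0 < (mnorm M (z - 0))\<^sup>2"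
    using spd_quadratic_pos[OF M] by (simp add: mnorm_square[OF M])
  show ?thesis
  proof (rule bdd_aboveI)
    fix c
    assume "c \<in> {c. strongly_convex_wrt g gg M c}"
    then have "c / 2 * (mnorm M (z - 0))\<^sup>2 \<le> bregman g gg 0 z"
      unfolding strongly_convex_wrt_def by blast
    then show "c \<le> 2 * bregman g gg 0 z / (mnorm M (z - 0))\<^sup>2"
      using N by (simp add: field_simps)
  qed
qed

lemma closed_strongly_convex_wrt_constants: "closed {c. strongly_convex_wrt g gg M c}"
  unfolding strongly_convex_wrt_def
  by (intro closed_Collect_all closed_Collect_le continuous_intros) simp_all

lemma sc_const_greatest:
  fixes M :: "real^'n^'n"
  assumes M: "spd M" and c: "strongly_convex_wrt g gg M c"
  shows sc_const_ge: "c \<le> sc_const g gg M"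
    and strongly_convex_wrt_sc_const: "strongly_convex_wrt g gg M (sc_const g gg M)"
proof -
  let ?C = "{c. strongly_convex_wrt g gg M c}"
  show "c \<le> sc_const g gg M"
    unfolding sc_const_def using c strongly_convex_wrt_constants_bdd_above[OF M] by (auto intro: cSup_upper)
  have "Sup ?C \<in> ?C"
    using c by (intro closed_contains_Sup strongly_convex_wrt_constants_bdd_above[OF M]
        closed_strongly_convex_wrt_constants) auto
  then show "strongly_convex_wrt g gg M (sc_const g gg M)"
    unfolding sc_const_def by simp
qed

lemma sc_const_add_spd_quadratic:
  fixes A M :: "real^'n^'n"
  assumes A: "spd A" and M: "spd M" and convex: "\<And>x y. 0 \<le> bregman g gg y x"
  shows sc_const_add_spd_quadratic_pos:
      "0 < sc_const (\<lambda>p. g p + 1/2 * ((A *v p) \<bullet> p)) (\<lambda>p. gg p + A *v p) M"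
    and strongly_convex_wrt_sc_const_add_spd_quadratic:
      "strongly_convex_wrt (\<lambda>p. g p + 1/2 * ((A *v p) \<bullet> p)) (\<lambda>p. gg p + A *v p) M
         (sc_const (\<lambda>p. g p + 1/2 * ((A *v p) \<bullet> p)) (\<lambda>p. gg p + A *v p) M)"
proof -
  obtain c where "0 < c"
    and c: "strongly_convex_wrt (\<lambda>p. g p + 1/2 * ((A *v p) \<bullet> p)) (\<lambda>p. gg p + A *v p) M c"
    using strongly_convex_wrt_add_spd_quadratic[OF A M convex] by blast
  then show "0 < sc_const (\<lambda>p. g p + 1/2 * ((A *v p) \<bullet> p)) (\<lambda>p. gg p + A *v p) M"
    using sc_const_ge[OF M c] by linarith
  show "strongly_convex_wrt (\<lambda>p. g p + 1/2 * ((A *v p) \<bullet> p)) (\<lambda>p. gg p + A *v p) M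
         (sc_const (\<lambda>p. g p + 1/2 * ((A *v p) \<bullet> p)) (\<lambda>p. gg p + A *v p) M)"
    by (rule strongly_convex_wrt_sc_const[OF M c])
qed

lemma strongly_convex_wrt_add_quadratic_monotone:
  assumes "strongly_convex_wrt (\<lambda>x. g x + 1/2 * ((K *v x) \<bullet> x)) (\<lambda>x. gg x + K *v x) M c"
  shows "c * (mnorm M (x - y))\<^sup>2 \<le> (gg x - gg y) \<bullet> (x - y) + (K *v (x - y)) \<bullet> (x - y)"
proof -
  have "gg x + K *v x - (gg y + K *v y) = (gg x - gg y) + K *v (x - y)"
    by (simp add: matrix_vector_mult_diff_distrib)
  then show ?thesis
    using strongly_convex_wrt_monotone[OF assms, of x y] by (simp only: inner_add_left)
qed

section \<open>The transformed primal-dual flow\<close>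

text \<open>The fields \<open>\<G>\<^sup>u\<close> and \<open>\<G>\<^sup>p\<close>, with \<open>gf\<close>, \<open>gh\<close> the gradients of \<open>f\<close>, \<open>h\<close> and the partial
  derivatives \<open>\<partial>\<^sub>u\<L> = gf u + B\<^sup>T p\<close>, \<open>\<partial>\<^sub>p\<L> = B u - gh p\<close> written out.\<close>

definition tpd_flow_u ::
    "real^'m^'n \<Rightarrow> (real^'m \<Rightarrow> real^'m) \<Rightarrow> (real^'n \<Rightarrow> real^'n) \<Rightarrow> real^'m^'m \<Rightarrow> real^'n^'n
      \<Rightarrow> real^'m \<Rightarrow> real^'n \<Rightarrow> real^'m" where
  "tpd_flow_u B gf gh IV TP u p =
     - (matrix_inv IV *v ((gf u + transpose B *v p) + transpose B *v (matrix_inv TP *v (B *v u - gh p))))"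

definition tpd_flow_p ::
    "real^'m^'n \<Rightarrow> (real^'m \<Rightarrow> real^'m) \<Rightarrow> (real^'n \<Rightarrow> real^'n) \<Rightarrow> real^'n^'n \<Rightarrow> real^'m^'m
      \<Rightarrow> real^'m \<Rightarrow> real^'n \<Rightarrow> real^'n" where
  "tpd_flow_p B gf gh IQ TU u p =
     matrix_inv IQ *v ((B *v u - gh p) - B *v (matrix_inv TU *v (gf u + transpose B *v p)))"

lemma tpd_flow_dissipation_eq:
  fixes B :: "real^'m^'n" and gf :: "real^'m \<Rightarrow> real^'m" and gh :: "real^'n \<Rightarrow> real^'n"
    and TU IV :: "real^'m^'m" and TP IQ :: "real^'n^'n" and u us :: "real^'m" and p ps :: "real^'n"
  assumes saddle_u: "gf us + transpose B *v ps = 0" and saddle_p: "B *v us - gh ps = 0"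
    and TU: "spd TU" and IV: "spd IV" and TP: "spd TP" and IQ: "spd IQ"
  defines "\<xi> \<equiv> u - us" and "\<eta> \<equiv> p - ps"
    and "s \<equiv> matrix_inv TU *v (transpose B *v (p - ps))" and "t \<equiv> matrix_inv TP *v (B *v (u - us))"
  shows "- ((IV *v \<xi>) \<bullet> tpd_flow_u B gf gh IV TP u p + (IQ *v \<eta>) \<bullet> tpd_flow_p B gf gh IQ TU u p)
       = ((gf u - gf us) \<bullet> \<xi> + (B *v \<xi>) \<bullet> t) + ((gh p - gh ps) \<bullet> \<eta> + (transpose B *v \<eta>) \<bullet> s)
         + (gf u - gf us) \<bullet> s - (gh p - gh ps) \<bullet> t"
proof -
  define a b where "a = gf u - gf us" and "b = gh p - gh ps"
  have dLu: "gf u + transpose B *v p = a + transpose B *v \<eta>"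
    using saddle_u unfolding a_def \<eta>_def matrix_vector_mult_diff_distrib
    by (simp add: algebra_simps eq_neg_iff_add_eq_0)
  have dLp: "B *v u - gh p = B *v \<xi> - b"
    using saddle_p unfolding b_def \<xi>_def matrix_vector_mult_diff_distrib
    by (simp add: algebra_simps)
  have TU_inv: "(matrix_inv TU *v x) \<bullet> y = x \<bullet> (matrix_inv TU *v y)" for x y
    by (rule spd_inner_commute[OF spd_matrix_inv[OF TU]])
  have TP_inv: "(matrix_inv TP *v x) \<bullet> y = x \<bullet> (matrix_inv TP *v y)" for x y
    by (rule spd_inner_commute[OF spd_matrix_inv[OF TP]])
  have "- ((IV *v \<xi>) \<bullet> tpd_flow_u B gf gh IV TP u p + (IQ *v \<eta>) \<bullet> tpd_flow_p B gf gh IQ TU u p)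
      = \<xi> \<bullet> (a + transpose B *v \<eta> + transpose B *v (matrix_inv TP *v (B *v \<xi> - b)))
        - \<eta> \<bullet> (B *v \<xi> - b - B *v (matrix_inv TU *v (a + transpose B *v \<eta>)))"
    unfolding tpd_flow_u_def tpd_flow_p_def dLu dLp
    by (simp add: spd_inner_matrix_inv[OF IV] spd_inner_matrix_inv[OF IQ])
  also have "\<dots> = (a \<bullet> \<xi> + (B *v \<xi>) \<bullet> t) + (b \<bullet> \<eta> + (transpose B *v \<eta>) \<bullet> s) + a \<bullet> s - b \<bullet> t"
  proof -
    have "\<xi> \<bullet> (transpose B *v \<eta>) = \<eta> \<bullet> (B *v \<xi>)"
      using inner_matrix_vector_left[of B \<xi> \<eta>] by (metis inner_commute)
    moreover have "\<xi> \<bullet> (transpose B *v (matrix_inv TP *v (B *v \<xi>))) = (B *v \<xi>) \<bullet> t"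
      unfolding t_def \<xi>_def[symmetric] by (rule inner_matrix_vector_left[symmetric])
    moreover have "\<xi> \<bullet> (transpose B *v (matrix_inv TP *v b)) = b \<bullet> t"
      unfolding t_def \<xi>_def[symmetric]
      using inner_matrix_vector_left[of B \<xi> "matrix_inv TP *v b"] TP_inv[of b "B *v \<xi>"]
      by (metis inner_commute)
    moreover have "\<eta> \<bullet> (B *v (matrix_inv TU *v a)) = a \<bullet> s"
      unfolding s_def \<eta>_def[symmetric]
      using inner_matrix_vector_right[of \<eta> B "matrix_inv TU *v a"] TU_inv[of a "transpose B *v \<eta>"]
      by (metis inner_commute)
    moreover have "\<eta> \<bullet> (B *v s) = (transpose B *v \<eta>) \<bullet> s"
      by (rule inner_matrix_vector_right)
    ultimately show ?thesis
      unfolding matrix_vector_mult_diff_distrib matrix_vector_right_distrib inner_add_right inner_diff_right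
        s_def[unfolded \<eta>_def[symmetric], symmetric]
      by (simp add: inner_commute)
  qed
  finally show ?thesis
    unfolding a_def b_def .
qed

lemma tpd_flow_dissipation:
  fixes B :: "real^'m^'n" and gf :: "real^'m \<Rightarrow> real^'m" and gh :: "real^'n \<Rightarrow> real^'n"
    and TU IV :: "real^'m^'m" and TP IQ :: "real^'n^'n" and u us :: "real^'m" and p ps :: "real^'n"
  assumes saddle_u: "gf us + transpose B *v ps = 0" and saddle_p: "B *v us - gh ps = 0"
    and TU: "spd TU" and IV: "spd IV" and TP: "spd TP" and IQ: "spd IQ"
    and h_S11: "S11 h gh TP muh Lh" and Lh1: "Lh \<le> 1"
    and f_S11: "S11 f gf TU muf Lf" and Lf1: "Lf \<le> 1"
    and fB_sc: "strongly_convex_wrt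
                  (\<lambda>u. f u + (1/2) * (((transpose B ** matrix_inv TP ** B) *v u) \<bullet> u))
                  (\<lambda>u. gf u + (transpose B ** matrix_inv TP ** B) *v u) IV mufB"
    and hB_sc: "strongly_convex_wrt
                  (\<lambda>p. h p + (1/2) * (((B ** matrix_inv TU ** transpose B) *v p) \<bullet> p))
                  (\<lambda>p. gh p + (B ** matrix_inv TU ** transpose B) *v p) IQ muhB"
  shows "min mufB muhB * ((1/2) * (mnorm IV (u - us))\<^sup>2 + (1/2) * (mnorm IQ (p - ps))\<^sup>2)
           + muf / 2 * (mnorm TU (u + matrix_inv TU *v (transpose B *v p)
                                  - (us + matrix_inv TU *v (transpose B *v ps))))\<^sup>2
           + muh / 2 * (mnorm TP (p - matrix_inv TP *v (B *v u) - (ps - matrix_inv TP *v (B *v us))))\<^sup>2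
         \<le> - ((IV *v (u - us)) \<bullet> tpd_flow_u B gf gh IV TP u p
              + (IQ *v (p - ps)) \<bullet> tpd_flow_p B gf gh IQ TU u p)"
proof -
  define \<xi> \<eta> where "\<xi> = u - us" and "\<eta> = p - ps"
  define a b where "a = gf u - gf us" and "b = gh p - gh ps"
  define s t where "s = matrix_inv TU *v (transpose B *v \<eta>)" and "t = matrix_inv TP *v (B *v \<xi>)"
  have TU_s: "TU *v s = transpose B *v \<eta>"
    unfolding s_def by (rule spd_matrix_inv_cancel(1)[OF TU])
  have TP_t: "TP *v t = B *v \<xi>"
    unfolding t_def by (rule spd_matrix_inv_cancel(1)[OF TP])
  have fB_monotone: "mufB * (mnorm IV \<xi>)\<^sup>2 \<le> a \<bullet> \<xi> + (B *v \<xi>) \<bullet> t"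
    using strongly_convex_wrt_add_quadratic_monotone[OF fB_sc, of u us]
      quadratic_form_congruence[of "transpose B" "matrix_inv TP" \<xi>]
    unfolding transpose_transpose \<xi>_def[symmetric] a_def[symmetric] t_def[symmetric] by linarith
  have hB_monotone: "muhB * (mnorm IQ \<eta>)\<^sup>2 \<le> b \<bullet> \<eta> + (transpose B *v \<eta>) \<bullet> s"
    using strongly_convex_wrt_add_quadratic_monotone[OF hB_sc, of p ps]
      quadratic_form_congruence[of B "matrix_inv TU" \<eta>]
    unfolding \<eta>_def[symmetric] b_def[symmetric] s_def[symmetric] by linarith
  have f_shifted: "muf/2 * (mnorm TU (\<xi> + s))\<^sup>2 \<le> 1/2 * (a \<bullet> \<xi>) + a \<bullet> s + 1/2 * ((transpose B *v \<eta>) \<bullet> s)"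
    using S11_shifted_bound[OF f_S11 Lf1, of u us s]
    unfolding mnorm_square[OF TU, of s] TU_s \<xi>_def[symmetric] a_def[symmetric] .
  have h_shifted: "muh/2 * (mnorm TP (\<eta> + - t))\<^sup>2 \<le> 1/2 * (b \<bullet> \<eta>) - b \<bullet> t + 1/2 * ((B *v \<xi>) \<bullet> t)"
    using S11_shifted_bound[OF h_S11 Lh1, of p ps "- t"]
    unfolding mnorm_uminus mnorm_square[OF TP, of t] TP_t \<eta>_def[symmetric] b_def[symmetric]
    by (simp add: inner_minus_right)
  have "min mufB muhB * (mnorm IV \<xi>)\<^sup>2 \<le> mufB * (mnorm IV \<xi>)\<^sup>2"
    and "min mufB muhB * (mnorm IQ \<eta>)\<^sup>2 \<le> muhB * (mnorm IQ \<eta>)\<^sup>2"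
    by (simp_all add: mult_right_mono)
  then have min_bound: "min mufB muhB * ((1/2) * (mnorm IV \<xi>)\<^sup>2 + (1/2) * (mnorm IQ \<eta>)\<^sup>2)
      \<le> 1/2 * (mufB * (mnorm IV \<xi>)\<^sup>2) + 1/2 * (muhB * (mnorm IQ \<eta>)\<^sup>2)"
    by (simp add: algebra_simps)
  have shifted_u: "u + matrix_inv TU *v (transpose B *v p) - (us + matrix_inv TU *v (transpose B *v ps)) = \<xi> + s"
    and shifted_p: "p - matrix_inv TP *v (B *v u) - (ps - matrix_inv TP *v (B *v us)) = \<eta> + - t"
    unfolding s_def t_def \<xi>_def \<eta>_def matrix_vector_mult_diff_distrib by simp_all
  have identity: "- ((IV *v \<xi>) \<bullet> tpd_flow_u B gf gh IV TP u p + (IQ *v \<eta>) \<bullet> tpd_flow_p B gf gh IQ TU u p)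
      = (a \<bullet> \<xi> + (B *v \<xi>) \<bullet> t) + (b \<bullet> \<eta> + (transpose B *v \<eta>) \<bullet> s) + a \<bullet> s - b \<bullet> t"
    using tpd_flow_dissipation_eq[where gf = gf and gh = gh and u = u and p = p,
        OF saddle_u saddle_p TU IV TP IQ]
    unfolding \<xi>_def[symmetric] \<eta>_def[symmetric] a_def[symmetric] b_def[symmetric]
      s_def[symmetric] t_def[symmetric] .
  \<comment> \<open>half of each monotonicity bound plus both shifted bounds gives exactly the identity\<close>
  show ?thesis
    unfolding shifted_u shifted_p \<xi>_def[symmetric] \<eta>_def[symmetric] identity
    using fB_monotone hB_monotone f_shifted h_shifted min_bound by linarith
qed

section \<open>Exponential decay of the energy\<close>

lemma has_real_derivative_half_mnorm_square:
  fixes M :: "real^'n^'n"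
  assumes M: "spd M" and w: "(w has_vector_derivative w') (at s within S)"
  shows "((\<lambda>s. 1/2 * (mnorm M (w s))\<^sup>2) has_real_derivative (M *v w s) \<bullet> w') (at s within S)"
proof -
  have "((\<lambda>s. M *v w s) has_vector_derivative M *v w') (at s within S)"
    by (rule bounded_linear.has_vector_derivative[OF matrix_vector_mul_bounded_linear w])
  then have "((\<lambda>s. (M *v w s) \<bullet> w s) has_vector_derivative (M *v w s) \<bullet> w' + (M *v w') \<bullet> w s)
      (at s within S)"
    by (rule bounded_bilinear.has_vector_derivative[OF bounded_bilinear_inner _ w])
  moreover have "(M *v w') \<bullet> w s = (M *v w s) \<bullet> w'"
    using spd_inner_commute[OF M] by (simp add: inner_commute)
  ultimately have "((\<lambda>s. (M *v w s) \<bullet> w s) has_real_derivative 2 * ((M *v w s) \<bullet> w')) (at s within S)"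
    unfolding has_real_derivative_iff_has_vector_derivative by simp
  from DERIV_cmult[OF this, of "1/2"] show ?thesis
    unfolding mnorm_square[OF M] by simp
qed

lemma exp_decay_of_derivative_le:
  fixes \<phi> \<phi>' :: "real \<Rightarrow> real"
  assumes deriv: "\<And>s. 0 \<le> s \<Longrightarrow> (\<phi> has_real_derivative \<phi>' s) (at s within {0..})"
    and bound: "\<And>s. 0 \<le> s \<Longrightarrow> \<phi>' s \<le> - \<mu> * \<phi> s"
    and t: "0 \<le> t"
  shows "\<phi> t \<le> exp (- \<mu> * t) * \<phi> 0"
proof -
  define \<psi> where "\<psi> s = exp (\<mu> * s) * \<phi> s" for s
  have d\<psi>: "(\<psi> has_real_derivative exp (\<mu> * s) * (\<mu> * \<phi> s + \<phi>' s)) (at s within {0..})"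
    if "0 \<le> s" for s
    unfolding \<psi>_def[abs_def] using deriv[OF that]
    by (auto intro!: derivative_eq_intros simp: algebra_simps)
  have "\<psi> t \<le> \<psi> 0"
  proof (rule DERIV_nonpos_imp_decreasing_open[OF t])
    fix x
    assume x: "0 < x" "x < t"
    have "at x within {0..} = at x"
      by (rule at_within_interior) (use x in simp)
    moreover have "exp (\<mu> * x) * (\<mu> * \<phi> x + \<phi>' x) \<le> 0"
      using bound[of x] x by (intro mult_nonneg_nonpos) auto
    ultimately show "\<exists>y. (\<psi> has_real_derivative y) (at x) \<and> y \<le> 0"
      using d\<psi>[of x] x by auto
  next
    have "continuous_on {0..} \<psi>"
      using d\<psi> by (intro DERIV_continuous_on) auto
    then show "continuous_on {0..t} \<psi>"
      by (rule continuous_on_subset) auto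
  qed
  have "\<phi> t = exp (- \<mu> * t) * \<psi> t"
    by (simp add: \<psi>_def exp_minus field_simps)
  also have "\<dots> \<le> exp (- \<mu> * t) * \<psi> 0"
    using \<open>\<psi> t \<le> \<psi> 0\<close> by simp
  also have "\<dots> = exp (- \<mu> * t) * \<phi> 0"
    by (simp add: \<psi>_def)
  finally show ?thesis .
qed

lemma flow_energy_exp_decay:
  fixes uu :: "real \<Rightarrow> real^'m" and pp :: "real \<Rightarrow> real^'n"
    and Gu :: "real^'m \<Rightarrow> real^'n \<Rightarrow> real^'m" and Gp :: "real^'m \<Rightarrow> real^'n \<Rightarrow> real^'n"
    and IV :: "real^'m^'m" and IQ :: "real^'n^'n"
  assumes IV: "spd IV" and IQ: "spd IQ"
    and flow: "\<forall>t\<ge>0. (uu has_vector_derivative Gu (uu t) (pp t)) (at t within {0..}) \<and>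
                      (pp has_vector_derivative Gp (uu t) (pp t)) (at t within {0..})"
    and dissipative: "\<And>u p. \<mu> * ((1/2) * (mnorm IV (u - us))\<^sup>2 + (1/2) * (mnorm IQ (p - ps))\<^sup>2)
                        \<le> - ((IV *v (u - us)) \<bullet> Gu u p + (IQ *v (p - ps)) \<bullet> Gp u p)"
    and t: "0 \<le> t"
  shows "(1/2) * (mnorm IV (uu t - us))\<^sup>2 + (1/2) * (mnorm IQ (pp t - ps))\<^sup>2
     \<le> exp (- \<mu> * t) * ((1/2) * (mnorm IV (uu 0 - us))\<^sup>2 + (1/2) * (mnorm IQ (pp 0 - ps))\<^sup>2)"
proof -
  define E where "E s = (1/2) * (mnorm IV (uu s - us))\<^sup>2 + (1/2) * (mnorm IQ (pp s - ps))\<^sup>2" for s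
  define D where "D s = (IV *v (uu s - us)) \<bullet> Gu (uu s) (pp s) + (IQ *v (pp s - ps)) \<bullet> Gp (uu s) (pp s)"
    for s
  have "E t \<le> exp (- \<mu> * t) * E 0"
  proof (rule exp_decay_of_derivative_le[OF _ _ t])
    fix s :: real
    assume "0 \<le> s"
    then have "((\<lambda>s. uu s - us) has_vector_derivative Gu (uu s) (pp s)) (at s within {0..})"
      and "((\<lambda>s. pp s - ps) has_vector_derivative Gp (uu s) (pp s)) (at s within {0..})"
      using flow by (auto intro!: derivative_eq_intros)
    then show "(E has_real_derivative D s) (at s within {0..})"
      unfolding E_def[abs_def] D_def
      by (intro DERIV_add has_real_derivative_half_mnorm_square IV IQ)
    show "D s \<le> - \<mu> * E s"
      using dissipative[of "uu s" "pp s"] unfolding D_def E_def by simp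
  qed
  then show ?thesis
    unfolding E_def .
qed

theorem theorem5p3:
  fixes B :: "real^'m^'n"
    and f :: "real^'m \<Rightarrow> real" and gf :: "real^'m \<Rightarrow> real^'m"
    and h :: "real^'n \<Rightarrow> real" and gh :: "real^'n \<Rightarrow> real^'n"
    and us :: "real^'m" and ps :: "real^'n"
    and TU IV :: "real^'m^'m" and TP IQ :: "real^'n^'n"
    and muf Lf muh Lh mufB :: real
  assumes mn: "CARD('n) \<le> CARD('m)"
    and rank: "rank B = CARD('n)"
    and f_conv: "convex_on UNIV f"
    and f_diff: "\<And>u. (f has_derivative (\<lambda>d. gf u \<bullet> d)) (at u)"
    and f_C1: "continuous_on UNIV gf"
    and f_lip: "\<exists>K. K-lipschitz_on UNIV gf"
    and h_conv: "convex_on UNIV h"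
    and h_diff: "\<And>p. (h has_derivative (\<lambda>d. gh p \<bullet> d)) (at p)"
    and h_C1: "continuous_on UNIV gh"
    and h_lip: "\<exists>K. K-lipschitz_on UNIV gh"
    and saddle_u: "gf us + transpose B *v ps = 0"
    and saddle_p: "B *v us - gh ps = 0"
    and spd_TU: "spd TU" and spd_IV: "spd IV" and spd_TP: "spd TP" and spd_IQ: "spd IQ"
    and h_S11: "S11 h gh TP muh Lh" and Lh1: "Lh \<le> 1"
    and f_S11: "S11 f gf TU muf Lf" and Lf1: "Lf \<le> 1"
    and fB_sc: "strongly_convex_wrt
                  (\<lambda>u. f u + (1/2) * (((transpose B ** matrix_inv TP ** B) *v u) \<bullet> u))
                  (\<lambda>u. gf u + (transpose B ** matrix_inv TP ** B) *v u) IV mufB"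
    and mufB_pos: "mufB > 0"
  shows
    "let dLu = (\<lambda>u p. gf u + transpose B *v p);
         dLp = (\<lambda>u p. B *v u - gh p);
         Gu = (\<lambda>u p. - (matrix_inv IV *v (dLu u p + transpose B *v (matrix_inv TP *v dLp u p))));
         Gp = (\<lambda>u p. matrix_inv IQ *v (dLp u p - B *v (matrix_inv TU *v dLu u p)));
         E = (\<lambda>u p. (1/2) * (mnorm IV (u - us))\<^sup>2 + (1/2) * (mnorm IQ (p - ps))\<^sup>2);
         muhB = sc_const (\<lambda>p. h p + (1/2) * (((B ** matrix_inv TU ** transpose B) *v p) \<bullet> p))
                  (\<lambda>p. gh p + (B ** matrix_inv TU ** transpose B) *v p) IQ;
         mu = min mufB muhB;
         v = (\<lambda>u p. u + matrix_inv TU *v (transpose B *v p));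
         q = (\<lambda>u p. p - matrix_inv TP *v (B *v u))
     in 0 < mu \<and>
        (\<forall>u p. - ((IV *v (u - us)) \<bullet> Gu u p + (IQ *v (p - ps)) \<bullet> Gp u p)
                 \<ge> mu * E u p + muf / 2 * (mnorm TU (v u p - v us ps))\<^sup>2
                    + muh / 2 * (mnorm TP (q u p - q us ps))\<^sup>2) \<and>
        (\<forall>(uu :: real \<Rightarrow> real^'m) (pp :: real \<Rightarrow> real^'n).
            (\<forall>t\<ge>0. (uu has_vector_derivative Gu (uu t) (pp t)) (at t within {0..}) \<and>
                    (pp has_vector_derivative Gp (uu t) (pp t)) (at t within {0..}))
            \<longrightarrow> (\<forall>t>0. E (uu t) (pp t) \<le> exp (- mu * t) * E (uu 0) (pp 0)))"
proof -
  have "inj ((*v) (transpose B))"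
    using rank full_rank_injective[of "transpose B"] by (simp add: rank_transpose)
  then have hB_spd: "spd (B ** matrix_inv TU ** transpose B)"
    by (intro spd_congruence spd_matrix_inv spd_TU)
  note h_convex = S11_bregman_nonneg[OF h_S11]
  note muhB_pos = sc_const_add_spd_quadratic_pos[OF hB_spd spd_IQ h_convex]
  note hB_sc = strongly_convex_wrt_sc_const_add_spd_quadratic[OF hB_spd spd_IQ h_convex]
  note dissipation = tpd_flow_dissipation[where gf = gf and gh = gh,
      OF saddle_u saddle_p spd_TU spd_IV spd_TP spd_IQ h_S11 Lh1 f_S11 Lf1 fB_sc hB_sc]
  have slack: "0 \<le> muf / 2 * (mnorm TU x)\<^sup>2" "0 \<le> muh / 2 * (mnorm TP y)\<^sup>2" for x y
    using f_S11 h_S11 unfolding S11_def by simp_all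
  show ?thesis
    unfolding Let_def
    apply (intro conjI allI impI)
    subgoal using mufB_pos muhB_pos by simp
    subgoal for u p using dissipation[of u p] by (simp only: tpd_flow_u_def tpd_flow_p_def)
    subgoal for uu pp t
      apply (rule flow_energy_exp_decay[where Gu = "tpd_flow_u B gf gh IV TP"
            and Gp = "tpd_flow_p B gf gh IQ TU", OF spd_IV spd_IQ, unfolded tpd_flow_u_def tpd_flow_p_def])
      subgoal by assumption
      subgoal for u p
        by (rule order_trans[OF _ dissipation[of u p, unfolded tpd_flow_u_def tpd_flow_p_def]])
          (intro add_increasing2 slack order_refl)
      by simp
    done
qed

end
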